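(* If $\mathfrak{q}$ is a $\mathrm{Lie}$-nilpotent Leibniz algebra, then $\mathfrak{q}$ satisfies the $\mathrm{Lie}$-normalizer condition, i.e. every proper subalgebra $\mathfrak{s}$ of $\mathfrak{q}$ is properly contained in its $\mathrm{Lie}$-normalizer $N^{\mathrm{Lie}}_{\mathfrak{q}}(\mathfrak{s})$.
   Context: Fix a field $\mathbb{K}$ with $\frac12\in\mathbb{K}$. A Leibniz algebra is a $\mathbb{K}$-vector space with a bilinear bracket satisfying $[x,[y,z]]=[[x,y],z]-[[x,z],y]$. For two-sided ideals $\mathfrak{m},\mathfrak{n}$ of $\mathfrak{q}$, $[\mathfrak{m},\mathfrak{n}]_{\mathrm{Lie}}$ is the subspace spanned by all $[m,n]+[n,m]$, $m\in\mathfrak{m}$, $n\in\mathfrak{n}$. The lower $\mathrm{Lie}$-central series is $\mathfrak{q}^{[1]}=\mathfrak{q}$, $\mathfrak{q}^{[i]}=[\mathfrak{q}^{[i-1]},\mathfrak{q}]_{\mathrm{Lie}}$; $\mathfrak{q}$ is $\mathrm{Lie}$-nilpotent if $\mathfrak{q}^{[k]}=0$ for some $k$. For a subset $\mathfrak{m}\subseteq\mathfrak{q}$, the $\mathrm{Lie}$-normalizer is $N^{\mathrm{Lie}}_{\mathfrak{q}}(\mathfrak{m})=\{q\in\mathfrak{q}: [q,m]+[m,q]\in\mathfrak{m}\text{ for all } m\in\mathfrak{m}\}$. *)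

theory Defs
  imports Complex_Main
begin

text \<open>A Leibniz algebra over a field 'k: the carrier is the whole type 'v, a
  'k-vector space via scale, with a bilinear bracket satisfying the (left)
  Leibniz identity [x,[y,z]] = [[x,y],z] - [[x,z],y].\<close>

definition leibniz_algebra ::
  "('k::field \<Rightarrow> 'v::ab_group_add \<Rightarrow> 'v) \<Rightarrow> ('v \<Rightarrow> 'v \<Rightarrow> 'v) \<Rightarrow> bool" where
  "leibniz_algebra scale br \<longleftrightarrow>
     Vector_Spaces.vector_space scale \<and>
     (\<forall>x. Vector_Spaces.linear scale scale (br x)) \<and>
     (\<forall>y. Vector_Spaces.linear scale scale (\<lambda>x. br x y)) \<and>
     (\<forall>x y z. br x (br y z) = br (br x y) z - br (br x z) y)"

definition lie_bracket_sets ::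
  "('k::field \<Rightarrow> 'v::ab_group_add \<Rightarrow> 'v) \<Rightarrow> ('v \<Rightarrow> 'v \<Rightarrow> 'v) \<Rightarrow> 'v set \<Rightarrow> 'v set \<Rightarrow> 'v set" where
  "lie_bracket_sets scale br M N =
     module.span scale {br m n + br n m | m n. m \<in> M \<and> n \<in> N}"

text \<open>Lower Lie-central series: lower_lie_central scale br (Suc 0) = q,
  q^[i] = [q^[i-1], q]_Lie. Index 0 is set equal to the whole algebra as well.\<close>
fun lower_lie_central ::
  "('k::field \<Rightarrow> 'v::ab_group_add \<Rightarrow> 'v) \<Rightarrow> ('v \<Rightarrow> 'v \<Rightarrow> 'v) \<Rightarrow> nat \<Rightarrow> 'v set" where
  "lower_lie_central scale br 0 = UNIV"
| "lower_lie_central scale br (Suc 0) = UNIV"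
| "lower_lie_central scale br (Suc (Suc i)) =
     lie_bracket_sets scale br (lower_lie_central scale br (Suc i)) UNIV"

definition lie_nilpotent ::
  "('k::field \<Rightarrow> 'v::ab_group_add \<Rightarrow> 'v) \<Rightarrow> ('v \<Rightarrow> 'v \<Rightarrow> 'v) \<Rightarrow> bool" where
  "lie_nilpotent scale br \<longleftrightarrow> (\<exists>k. lower_lie_central scale br k = {0})"

definition subalgebra ::
  "('k::field \<Rightarrow> 'v::ab_group_add \<Rightarrow> 'v) \<Rightarrow> ('v \<Rightarrow> 'v \<Rightarrow> 'v) \<Rightarrow> 'v set \<Rightarrow> bool" where
  "subalgebra scale br S \<longleftrightarrow>
     module.subspace scale S \<and> (\<forall>x\<in>S. \<forall>y\<in>S. br x y \<in> S)"

definition lie_normalizer ::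
  "('v::ab_group_add \<Rightarrow> 'v \<Rightarrow> 'v) \<Rightarrow> 'v set \<Rightarrow> 'v set" where
  "lie_normalizer br M = {q. \<forall>m\<in>M. br q m + br m q \<in> M}"

end

theory Submission
  imports Defs
begin

text \<open>Some term of the lower Lie-central series lies in S (the last one is 0), while the
  first one, the whole algebra, does not. At the first index k with q^[k] in S, every
  x in q^[k-1] but outside S satisfies [x,s]+[s,x] in [q^[k-1],q]_Lie = q^[k], which
  is contained in S; so x lies in the Lie-normalizer of S but not in S.\<close>

lemma leibniz_algebra_module:
  assumes "leibniz_algebra scale br"
  shows "module scale"
  using assms unfolding leibniz_algebra_def module_iff_vector_space by blast

lemma lie_bracket_sets_base:
  assumes "module scale" and "m \<in> M" and "n \<in> N"
  shows "br m n + br n m \<in> lie_bracket_sets scale br M N"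
  unfolding lie_bracket_sets_def
  by (rule module.span_base[OF assms(1)]) (use assms(2,3) in blast)

lemma subalgebra_subset_lie_normalizer:
  assumes "module scale" and "subalgebra scale br S"
  shows "S \<subseteq> lie_normalizer br S"
  using assms module.subspace_add[OF assms(1)]
  unfolding subalgebra_def lie_normalizer_def by blast

lemma subset_lie_normalizer_if_lie_bracket_subset:
  assumes "module scale" and "lie_bracket_sets scale br M UNIV \<subseteq> S"
  shows "M \<subseteq> lie_normalizer br S"
  using assms lie_bracket_sets_base[OF assms(1)]
  unfolding lie_normalizer_def by blast

lemma lie_nilpotent_first_central_term_in:
  assumes "lie_nilpotent scale br" and "0 \<in> S" and "S \<noteq> UNIV"
  obtains i where "lower_lie_central scale br (Suc (Suc i)) \<subseteq> S"
    and "\<not> lower_lie_central scale br (Suc i) \<subseteq> S"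
proof -
  let ?P = "\<lambda>k. lower_lie_central scale br k \<subseteq> S"
  obtain k0 where "lower_lie_central scale br k0 = {0}"
    using assms(1) unfolding lie_nilpotent_def by blast
  with assms(2) have "?P k0" by simp
  then obtain k where Pk: "?P k" and below: "\<And>j. j < k \<Longrightarrow> \<not> ?P j"
    using exists_least_iff[of ?P] by blast
  have "k \<noteq> 0" and "k \<noteq> Suc 0"
    using Pk assms(3) by auto
  then obtain i where "k = Suc (Suc i)"
    by (metis not0_implies_Suc)
  with Pk below[of "Suc i"] show thesis
    using that by simp
qed

theorem mainTheorem2:
  fixes scale :: "'k::field \<Rightarrow> 'v::ab_group_add \<Rightarrow> 'v"
    and br :: "'v \<Rightarrow> 'v \<Rightarrow> 'v"
  assumes "(2::'k) \<noteq> 0"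
    and "leibniz_algebra scale br"
    and "lie_nilpotent scale br"
    and "subalgebra scale br S"
    and "S \<noteq> UNIV"
  shows "S \<subset> lie_normalizer br S"
proof -
  have M: "module scale"
    using assms(2) by (rule leibniz_algebra_module)
  have "0 \<in> S"
    using assms(4) module.subspace_0[OF M] unfolding subalgebra_def by blast
  then obtain i where in_S: "lower_lie_central scale br (Suc (Suc i)) \<subseteq> S"
    and not_in_S: "\<not> lower_lie_central scale br (Suc i) \<subseteq> S"
    using lie_nilpotent_first_central_term_in assms(3,5) by blast
  have "lower_lie_central scale br (Suc i) \<subseteq> lie_normalizer br S"
    using subset_lie_normalizer_if_lie_bracket_subset[OF M] in_S
    unfolding lower_lie_central.simps(3) by blast
  with not_in_S subalgebra_subset_lie_normalizer[OF M assms(4)] show ?thesis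
    by blast
qed

end
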